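(* Let $\tau,\nu$ be complex $n\times n$ matrices and $0\le\eta\le n$. Then, with all indices summed over $\{0,\dots,n-1\}$: 1. $\big\|\sum_{j,k,m}\tau_{j,k}\nu_{k,m}A_j^\dagger N_mA_k\big\|_\eta\le\|\tau\|\|\nu\|_{\max}\eta^2$; 2. $\big\|\sum_{j,k}\tau_{j,k}\nu_{k,k}A_j^\dagger A_k\big\|_\eta\le\|\tau\|\|\nu\|_{\max}\eta$; 3. $\big\|\sum_{j,k,l}\tau_{j,k}\nu_{l,k}A_j^\dagger N_lA_k\big\|_\eta\le\|\tau\|\|\nu\|_{\max}\eta^2$; 4. $\big\|\sum_{j,k,m}\tau_{j,k}\nu_{j,m}A_j^\dagger N_mA_k\big\|_\eta\le\|\tau\|\|\nu\|_{\max}\eta^2$; 5. $\big\|\sum_{j,k}\tau_{j,k}\nu_{j,j}A_j^\dagger A_k\big\|_\eta\le\|\tau\|\|\nu\|_{\max}\eta$; 6. $\big\|\sum_{j,k,l}\tau_{j,k}\nu_{l,j}A_j^\dagger N_l A_k\big\|_\eta\le\|\tau\|\|\nu\|_{\max}\eta^2$.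
   Context: Fermionic Fock space on $n$ spin orbitals: the $2^n$-dimensional Hilbert space with orthonormal basis $|c_0,\dots,c_{n-1}\rangle$, $c_j\in\{0,1\}$, with creation operators $A_j^\dagger|\dots,0_j,\dots\rangle=(-1)^{\sum_{k<j}c_k}|\dots,1_j,\dots\rangle$, $A_j^\dagger|\dots,1_j,\dots\rangle=0$, annihilation operators $A_j=(A_j^\dagger)^\dagger$, $N_j=A_j^\dagger A_j$, $N=\sum_jN_j$. The $\eta$-electron subspace is spanned by basis vectors with $\sum_jc_j=\eta$; $\eta$-electron states are unit vectors in it. For an operator $X$ commuting with $N$, $\|X\|_\eta=\max|\langle\phi_\eta|X|\psi_\eta\rangle|$ over $\eta$-electron states. $\|\tau\|$ is the spectral norm and $\|\nu\|_{\max}=\max_{l,m}|\nu_{l,m}|$. *)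

theory Defs
  imports Complex_Main
begin

text \<open>Fermionic Fock space on n spin orbitals. A basis vector |c_0,...,c_{n-1}\<rangle>
  is identified with its set of occupied orbitals S, a subset of {..<n}.
  Operators are represented by their matrices in this basis:
  X T S = \<langle>T|X|S\<rangle> for T, S subsets of {..<n}.\<close>

type_synonym fop = "nat set \<Rightarrow> nat set \<Rightarrow> complex"

definition fock_basis :: "nat \<Rightarrow> nat set set" where
  "fock_basis n = Pow {..<n}"

definition creation :: "nat \<Rightarrow> nat \<Rightarrow> fop" where
  "creation n j T S =
     (if S \<subseteq> {..<n} \<and> j < n \<and> j \<notin> S \<and> T = insert j S
      then (-1) ^ card {k \<in> S. k < j} else 0)"

definition annihilation :: "nat \<Rightarrow> nat \<Rightarrow> fop" where
  "annihilation n j T S = cnj (creation n j S T)"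

definition fmult :: "nat \<Rightarrow> fop \<Rightarrow> fop \<Rightarrow> fop" where
  "fmult n X Y T S = (\<Sum>R\<in>fock_basis n. X T R * Y R S)"

definition number_op :: "nat \<Rightarrow> nat \<Rightarrow> fop" where
  "number_op n j = fmult n (creation n j) (annihilation n j)"

definition eta_basis :: "nat \<Rightarrow> nat \<Rightarrow> nat set set" where
  "eta_basis n eta = {S \<in> fock_basis n. card S = eta}"

definition eta_state :: "nat \<Rightarrow> nat \<Rightarrow> (nat set \<Rightarrow> complex) \<Rightarrow> bool" where
  "eta_state n eta \<phi> \<longleftrightarrow>
     (\<forall>S. S \<notin> eta_basis n eta \<longrightarrow> \<phi> S = 0) \<and>
     (\<Sum>S\<in>eta_basis n eta. (cmod (\<phi> S))\<^sup>2) = 1"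

definition braket :: "nat \<Rightarrow> (nat set \<Rightarrow> complex) \<Rightarrow> fop \<Rightarrow> (nat set \<Rightarrow> complex) \<Rightarrow> complex" where
  "braket n \<phi> X \<psi> = (\<Sum>T\<in>fock_basis n. \<Sum>S\<in>fock_basis n. cnj (\<phi> T) * X T S * \<psi> S)"

definition eta_norm :: "nat \<Rightarrow> nat \<Rightarrow> fop \<Rightarrow> real" where
  "eta_norm n eta X =
     Sup {cmod (braket n \<phi> X \<psi>) | \<phi> \<psi>. eta_state n eta \<phi> \<and> eta_state n eta \<psi>}"

text \<open>n x n complex matrices are functions nat => nat => complex, indices in {..<n}.\<close>
definition vec_norm :: "nat \<Rightarrow> (nat \<Rightarrow> complex) \<Rightarrow> real" where
  "vec_norm n x = sqrt (\<Sum>i<n. (cmod (x i))\<^sup>2)"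

definition spectral_norm :: "nat \<Rightarrow> (nat \<Rightarrow> nat \<Rightarrow> complex) \<Rightarrow> real" where
  "spectral_norm n M =
     Sup {vec_norm n (\<lambda>i. \<Sum>k<n. M i k * x k) | x. vec_norm n x \<le> 1}"

text \<open>Max-entry norm (0 inserted only so that it is well defined when n = 0).\<close>
definition max_norm :: "nat \<Rightarrow> (nat \<Rightarrow> nat \<Rightarrow> complex) \<Rightarrow> real" where
  "max_norm n M = Max (insert 0 {cmod (M l m) | l m. l < n \<and> m < n})"

end

theory Submission
  imports Defs "HOL-Analysis.L2_Norm"
begin

(*
  For eta-electron states phi and psi write a_k(R) and b_j(R) for the coefficients of
  A_k psi and A_j phi at the configuration R. Because N_m is diagonal, every matrix element
  <phi|X|psi> of the six operators has the form
    sum_R sum_{j,k} conj (b_j(R)) f_j(R) tau_{j,k} g_k(R) a_k(R),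
  where one weight is 1 and the other is nu_{k,k}, nu_{j,j}, or a sum of entries of nu over
  the occupied orbitals of R. Only configurations with eta - 1 electrons contribute, so the
  weights are bounded by ||nu||_max resp. ||nu||_max * eta. The spectral norm bound for each
  R followed by Cauchy-Schwarz over R leaves sum_R sum_k |a_k(R)|^2 = <psi|N|psi> = eta.
*)

lemma sum_swap_innermost:
  "(\<Sum>a\<in>A. \<Sum>b\<in>B. \<Sum>c\<in>C. f a b c) = (\<Sum>c\<in>C. \<Sum>a\<in>A. \<Sum>b\<in>B. f a b c)"
  by (rule trans[OF sum.cong[OF refl sum.swap] sum.swap])

lemma sum_lessThan_if_mem:
  fixes n :: nat
  assumes "R \<subseteq> {..<n}"
  shows "(\<Sum>m<n. if m \<in> R then f m else 0) = sum f R"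
proof -
  have "{m \<in> {..<n}. m \<in> R} = R"
    using assms by auto
  then show ?thesis
    using sum.inter_filter[of "{..<n}" f "\<lambda>m. m \<in> R"] by simp
qed

section \<open>Spectral norm\<close>

lemma vec_norm_eq_L2_set: "vec_norm n x = L2_set (\<lambda>i. cmod (x i)) {..<n}"
  by (simp add: vec_norm_def L2_set_def)

lemma vec_norm_nonneg [simp]: "0 \<le> vec_norm n x"
  by (simp add: vec_norm_eq_L2_set)

lemma vec_norm_power2: "(vec_norm n x)\<^sup>2 = (\<Sum>i<n. (cmod (x i))\<^sup>2)"
  by (simp add: vec_norm_def sum_nonneg)

lemma vec_norm_scale: "vec_norm n (\<lambda>i. c * x i) = cmod c * vec_norm n x"
  unfolding vec_norm_eq_L2_set norm_mult by (simp add: L2_set_right_distrib)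

lemma bdd_above_spectral_norm_set:
  "bdd_above {vec_norm n (\<lambda>i. \<Sum>k<n. M i k * x k) | x. vec_norm n x \<le> 1}"
proof -
  have "vec_norm n (\<lambda>i. \<Sum>k<n. M i k * x k) \<le> sqrt (\<Sum>i<n. (\<Sum>k<n. cmod (M i k))\<^sup>2)"
    if "vec_norm n x \<le> 1" for x
  proof -
    have "cmod (x k) \<le> 1" if "k < n" for k
      using member_le_L2_set[of "{..<n}" k "\<lambda>i. cmod (x i)"] that \<open>vec_norm n x \<le> 1\<close>
      by (simp add: vec_norm_eq_L2_set)
    then have "cmod (\<Sum>k<n. M i k * x k) \<le> (\<Sum>k<n. cmod (M i k))" for i
      by (intro norm_sum[THEN order_trans] sum_mono)
        (auto simp: norm_mult intro: mult_left_le)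
    then show ?thesis
      unfolding vec_norm_def by (intro real_sqrt_le_mono sum_mono power_mono) auto
  qed
  then show ?thesis
    by (auto simp: bdd_above_def)
qed

lemma spectral_norm_nonneg: "0 \<le> spectral_norm n M"
proof -
  have "vec_norm n (\<lambda>i. \<Sum>k<n. M i k * 0) \<le> spectral_norm n M"
    unfolding spectral_norm_def
    by (rule cSup_upper[OF _ bdd_above_spectral_norm_set])
      (auto intro!: exI[of _ "\<lambda>_. 0"] simp: vec_norm_def)
  then show ?thesis
    by (simp add: vec_norm_def)
qed

lemma vec_norm_mult_le_spectral_norm:
  "vec_norm n (\<lambda>i. \<Sum>k<n. M i k * y k) \<le> spectral_norm n M * vec_norm n y"
proof (cases "vec_norm n y = 0")
  case True
  then have "\<forall>k<n. y k = 0"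
    by (simp add: vec_norm_eq_L2_set L2_set_eq_0_iff)
  then show ?thesis
    by (simp add: vec_norm_def)
next
  case False
  define c where "c = complex_of_real (1 / vec_norm n y)"
  have "vec_norm n (\<lambda>k. c * y k) = 1"
    using False unfolding vec_norm_scale by (simp add: c_def norm_divide)
  then have "vec_norm n (\<lambda>i. \<Sum>k<n. M i k * (c * y k)) \<le> spectral_norm n M"
    unfolding spectral_norm_def by (intro cSup_upper[OF _ bdd_above_spectral_norm_set]) auto
  also have "(\<lambda>i. \<Sum>k<n. M i k * (c * y k)) = (\<lambda>i. c * (\<Sum>k<n. M i k * y k))"
    by (simp add: sum_distrib_left mult_ac)
  finally have "cmod c * vec_norm n (\<lambda>i. \<Sum>k<n. M i k * y k) \<le> spectral_norm n M"
    by (simp only: vec_norm_scale)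
  moreover have "0 < vec_norm n y"
    using False vec_norm_nonneg[of n y] by linarith
  ultimately show ?thesis
    by (simp add: c_def norm_divide field_simps)
qed

lemma norm_bilinear_le_spectral_norm:
  "cmod (\<Sum>j<n. \<Sum>k<n. cnj (x j) * M j k * y k) \<le> spectral_norm n M * vec_norm n x * vec_norm n y"
proof -
  define w where "w i = (\<Sum>k<n. M i k * y k)" for i
  have "(\<Sum>j<n. \<Sum>k<n. cnj (x j) * M j k * y k) = (\<Sum>j<n. cnj (x j) * w j)"
    by (simp add: w_def sum_distrib_left mult_ac)
  then have "cmod (\<Sum>j<n. \<Sum>k<n. cnj (x j) * M j k * y k) \<le> (\<Sum>j<n. cmod (x j) * cmod (w j))"
    by (simp add: norm_sum[THEN order_trans] norm_mult)
  also have "\<dots> \<le> vec_norm n x * vec_norm n w"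
    using L2_set_mult_ineq[of "\<lambda>j. cmod (x j)" "\<lambda>j. cmod (w j)" "{..<n}"]
    by (simp add: vec_norm_eq_L2_set)
  also have "\<dots> \<le> vec_norm n x * (spectral_norm n M * vec_norm n y)"
    unfolding w_def by (intro mult_left_mono vec_norm_mult_le_spectral_norm) simp
  finally show ?thesis
    by (simp add: mult_ac)
qed

lemma norm_sum_bilinear_le_spectral_norm:
  "cmod (\<Sum>R\<in>Q. \<Sum>j<n. \<Sum>k<n. cnj (x R j) * M j k * y R k)
    \<le> spectral_norm n M * sqrt (\<Sum>R\<in>Q. \<Sum>j<n. (cmod (x R j))\<^sup>2)
        * sqrt (\<Sum>R\<in>Q. \<Sum>k<n. (cmod (y R k))\<^sup>2)"
proof -
  have "cmod (\<Sum>R\<in>Q. \<Sum>j<n. \<Sum>k<n. cnj (x R j) * M j k * y R k)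
      \<le> (\<Sum>R\<in>Q. cmod (\<Sum>j<n. \<Sum>k<n. cnj (x R j) * M j k * y R k))"
    by (rule norm_sum)
  also have "\<dots> \<le> (\<Sum>R\<in>Q. spectral_norm n M * (\<bar>vec_norm n (x R)\<bar> * \<bar>vec_norm n (y R)\<bar>))"
    using norm_bilinear_le_spectral_norm by (simp add: sum_mono mult.assoc)
  also have "\<dots> \<le> spectral_norm n M *
      (L2_set (\<lambda>R. vec_norm n (x R)) Q * L2_set (\<lambda>R. vec_norm n (y R)) Q)"
    unfolding sum_distrib_left[symmetric]
    by (intro mult_left_mono L2_set_mult_ineq spectral_norm_nonneg)
  finally show ?thesis
    by (simp add: L2_set_def vec_norm_power2 mult.assoc)
qed

section \<open>Matrix elements of hopping operators\<close>

lemma finite_fock_basis [simp]: "finite (fock_basis n)"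
  by (simp add: fock_basis_def)

lemma annihilation_eq:
  "annihilation n k R T =
    (if R \<subseteq> {..<n} \<and> k < n \<and> k \<notin> R \<and> T = insert k R then (-1) ^ card {q \<in> R. q < k} else 0)"
  by (simp add: annihilation_def creation_def)

definition annihilate :: "nat \<Rightarrow> nat \<Rightarrow> (nat set \<Rightarrow> complex) \<Rightarrow> nat set \<Rightarrow> complex" where
  "annihilate n k \<psi> R = (\<Sum>T\<in>fock_basis n. annihilation n k R T * \<psi> T)"

lemma annihilate_eq:
  assumes "R \<in> fock_basis n" "k < n"
  shows "annihilate n k \<psi> R = (if k \<in> R then 0 else (-1) ^ card {q \<in> R. q < k} * \<psi> (insert k R))"
proof -
  have "annihilate n k \<psi> R =
      (\<Sum>T\<in>fock_basis n. if T = insert k R \<and> k \<notin> R then (-1) ^ card {q \<in> R. q < k} * \<psi> T else 0)"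
    unfolding annihilate_def
    by (rule sum.cong) (use assms in \<open>auto simp: annihilation_eq fock_basis_def\<close>)
  also have "\<dots> = (if k \<in> R then 0 else (-1) ^ card {q \<in> R. q < k} * \<psi> (insert k R))"
    using assms by (auto simp: fock_basis_def)
  finally show ?thesis .
qed

lemma number_op_eq:
  "number_op n m R S = (if R = S \<and> S \<in> fock_basis n \<and> m \<in> S then 1 else 0)"
proof -
  have "number_op n m R S =
      (\<Sum>Q\<in>fock_basis n. if Q = S - {m} then if R = S \<and> S \<in> fock_basis n \<and> m \<in> S then 1 else 0 else 0)"
    unfolding number_op_def fmult_def
    by (rule sum.cong)
      (auto simp: creation_def annihilation_eq fock_basis_def insert_absorb
        power_mult_distrib[symmetric])
  also have "\<dots> = (if R = S \<and> S \<in> fock_basis n \<and> m \<in> S then 1 else 0)"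
    by (auto simp: fock_basis_def)
  finally show ?thesis .
qed

lemma fmult_number_op:
  "fmult n X (number_op n m) T S = (if S \<in> fock_basis n \<and> m \<in> S then X T S else 0)"
  by (simp add: fmult_def number_op_eq if_distrib if_distribR cong: if_cong)

lemma braket_sum: "braket n \<phi> (\<lambda>T S. \<Sum>i\<in>I. F i T S) \<psi> = (\<Sum>i\<in>I. braket n \<phi> (F i) \<psi>)"
  unfolding braket_def sum_distrib_left sum_distrib_right
  by (rule sum_swap_innermost)

lemma braket_scale: "braket n \<phi> (\<lambda>T S. c * F T S) \<psi> = c * braket n \<phi> F \<psi>"
  unfolding braket_def by (simp add: sum_distrib_left mult_ac)

lemma braket_fmult:
  "braket n \<phi> (fmult n X Y) \<psi> =
    (\<Sum>R\<in>fock_basis n. cnj (\<Sum>T\<in>fock_basis n. cnj (X T R) * \<phi> T) * (\<Sum>S\<in>fock_basis n. Y R S * \<psi> S))"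
proof -
  let ?P = "fock_basis n"
  have "braket n \<phi> (fmult n X Y) \<psi> = (\<Sum>T\<in>?P. \<Sum>S\<in>?P. \<Sum>R\<in>?P. cnj (\<phi> T) * X T R * Y R S * \<psi> S)"
    unfolding braket_def fmult_def by (simp add: sum_distrib_left sum_distrib_right mult_ac)
  also have "\<dots> = (\<Sum>R\<in>?P. \<Sum>T\<in>?P. \<Sum>S\<in>?P. cnj (\<phi> T) * X T R * Y R S * \<psi> S)"
    by (rule sum_swap_innermost)
  also have "\<dots> = (\<Sum>R\<in>?P. cnj (\<Sum>T\<in>?P. cnj (X T R) * \<phi> T) * (\<Sum>S\<in>?P. Y R S * \<psi> S))"
    by (simp add: sum_distrib_left sum_distrib_right mult_ac)
  finally show ?thesis .
qed

lemma braket_creation_annihilation: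
  "braket n \<phi> (fmult n (creation n j) (annihilation n k)) \<psi> =
    (\<Sum>R\<in>fock_basis n. cnj (annihilate n j \<phi> R) * annihilate n k \<psi> R)"
  by (simp add: braket_fmult annihilate_def annihilation_def)

lemma braket_creation_number_annihilation:
  "braket n \<phi> (fmult n (fmult n (creation n j) (number_op n m)) (annihilation n k)) \<psi> =
    (\<Sum>R\<in>fock_basis n. if m \<in> R then cnj (annihilate n j \<phi> R) * annihilate n k \<psi> R else 0)"
  unfolding braket_fmult
  by (rule sum.cong) (auto simp: fmult_number_op annihilate_def annihilation_def)

lemma braket_hopping:
  "braket n \<phi> (\<lambda>T S. \<Sum>j<n. \<Sum>k<n. c j k * fmult n (creation n j) (annihilation n k) T S) \<psi> =
    (\<Sum>R\<in>fock_basis n. \<Sum>j<n. \<Sum>k<n. cnj (annihilate n j \<phi> R) * c j k * annihilate n k \<psi> R)"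
  unfolding braket_sum braket_scale braket_creation_annihilation sum_distrib_left
  by (subst sum_swap_innermost) (simp add: mult_ac)

lemma braket_hopping_number:
  "braket n \<phi> (\<lambda>T S. \<Sum>j<n. \<Sum>k<n. \<Sum>m<n. c j k m *
      fmult n (fmult n (creation n j) (number_op n m)) (annihilation n k) T S) \<psi> =
    (\<Sum>R\<in>fock_basis n. \<Sum>j<n. \<Sum>k<n.
      cnj (annihilate n j \<phi> R) * (\<Sum>m\<in>R. c j k m) * annihilate n k \<psi> R)"
proof -
  let ?P = "fock_basis n"
  have "braket n \<phi> (\<lambda>T S. \<Sum>j<n. \<Sum>k<n. \<Sum>m<n. c j k m *
      fmult n (fmult n (creation n j) (number_op n m)) (annihilation n k) T S) \<psi> =
    (\<Sum>j<n. \<Sum>k<n. \<Sum>m<n. \<Sum>R\<in>?P.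
      if m \<in> R then c j k m * cnj (annihilate n j \<phi> R) * annihilate n k \<psi> R else 0)"
    unfolding braket_sum braket_scale braket_creation_number_annihilation
    by (simp add: sum_distrib_left if_distrib mult.assoc cong: if_cong)
  also have "\<dots> = (\<Sum>j<n. \<Sum>k<n. \<Sum>R\<in>?P. \<Sum>m<n.
      if m \<in> R then c j k m * cnj (annihilate n j \<phi> R) * annihilate n k \<psi> R else 0)"
    by (rule sum.cong[OF refl], rule sum.cong[OF refl], rule sum.swap)
  also have "\<dots> = (\<Sum>R\<in>?P. \<Sum>j<n. \<Sum>k<n. \<Sum>m<n.
      if m \<in> R then c j k m * cnj (annihilate n j \<phi> R) * annihilate n k \<psi> R else 0)"
    by (rule sum_swap_innermost)
  also have "\<dots> = (\<Sum>R\<in>?P. \<Sum>j<n. \<Sum>k<n.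
      cnj (annihilate n j \<phi> R) * (\<Sum>m\<in>R. c j k m) * annihilate n k \<psi> R)"
    by (intro sum.cong refl)
      (simp add: sum_lessThan_if_mem fock_basis_def sum_distrib_left sum_distrib_right mult_ac)
  finally show ?thesis .
qed

section \<open>Bounds on eta-electron states\<close>

lemma eta_state_eq_0: "eta_state n eta \<psi> \<Longrightarrow> S \<notin> eta_basis n eta \<Longrightarrow> \<psi> S = 0"
  by (simp add: eta_state_def)

lemma eta_state_card_expectation:
  assumes "eta_state n eta \<psi>"
  shows "(\<Sum>S\<in>fock_basis n. real (card S) * (cmod (\<psi> S))\<^sup>2) = real eta"
proof -
  have sub: "eta_basis n eta \<subseteq> fock_basis n"
    by (auto simp: eta_basis_def)
  have "(\<Sum>S\<in>fock_basis n. real (card S) * (cmod (\<psi> S))\<^sup>2) =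
      (\<Sum>S\<in>eta_basis n eta. real eta * (cmod (\<psi> S))\<^sup>2)"
    using eta_state_eq_0[OF assms]
    by (intro sum.mono_neutral_cong_right sub) (auto simp: eta_basis_def)
  also have "\<dots> = real eta"
    using assms by (simp add: eta_state_def sum_distrib_left[symmetric])
  finally show ?thesis .
qed

lemma annihilate_nonzero_card:
  assumes "eta_state n eta \<psi>" "R \<in> fock_basis n" "k < n" "annihilate n k \<psi> R \<noteq> 0"
  shows "card R < eta"
proof -
  have "k \<notin> R" "\<psi> (insert k R) \<noteq> 0"
    using assms(2-4) by (auto simp: annihilate_eq split: if_splits)
  then have "card (insert k R) = eta"
    using eta_state_eq_0[OF assms(1)] by (auto simp: eta_basis_def)
  moreover have "finite R"
    using assms(2) by (auto simp: fock_basis_def intro: finite_subset)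
  ultimately show ?thesis
    using \<open>k \<notin> R\<close> by simp
qed

(* Both sides are <psi|N|psi>: (R, k) with k not in R corresponds to (insert k R, k). *)
lemma sum_norm_annihilate_power2:
  "(\<Sum>R\<in>fock_basis n. \<Sum>k<n. (cmod (annihilate n k \<psi> R))\<^sup>2) =
    (\<Sum>S\<in>fock_basis n. real (card S) * (cmod (\<psi> S))\<^sup>2)"
proof -
  let ?P = "fock_basis n"
  define g where "g S = (cmod (\<psi> S))\<^sup>2" for S
  have fin: "finite S" if "S \<in> ?P" for S
    using that by (auto simp: fock_basis_def intro: finite_subset)
  have bij: "bij_betw (\<lambda>(R, k). (insert k R, k)) (SIGMA R:?P. {..<n} - R) (SIGMA S:?P. S)"
    by (rule bij_betw_byWitness[where f' = "\<lambda>(S, k). (S - {k}, k)"])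
      (auto simp: fock_basis_def)
  have "(\<Sum>R\<in>?P. \<Sum>k<n. (cmod (annihilate n k \<psi> R))\<^sup>2) = (\<Sum>R\<in>?P. \<Sum>k\<in>{..<n} - R. g (insert k R))"
    by (intro sum.cong refl sum.mono_neutral_cong_right)
      (auto simp: annihilate_eq g_def norm_mult norm_power)
  also have "\<dots> = (\<Sum>(R, k)\<in>(SIGMA R:?P. {..<n} - R). g (insert k R))"
    by (rule sum.Sigma) auto
  also have "\<dots> = (\<Sum>(S, k)\<in>(SIGMA S:?P. S). g S)"
    using sum.reindex_bij_betw[OF bij, of "\<lambda>(S, k). g S"] by (simp add: case_prod_beta)
  also have "\<dots> = (\<Sum>S\<in>?P. \<Sum>k\<in>S. g S)"
    by (rule sum.Sigma[symmetric]) (auto intro: fin)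
  finally show ?thesis
    by (simp add: g_def)
qed

lemma sum_norm_scaled_annihilate_power2_le:
  assumes "eta_state n eta \<psi>"
    and "\<And>k R. k < n \<Longrightarrow> R \<in> fock_basis n \<Longrightarrow> card R < eta \<Longrightarrow> cmod (f k R) \<le> C"
  shows "(\<Sum>R\<in>fock_basis n. \<Sum>k<n. (cmod (f k R * annihilate n k \<psi> R))\<^sup>2) \<le> C\<^sup>2 * real eta"
proof -
  have "(cmod (f k R * annihilate n k \<psi> R))\<^sup>2 \<le> C\<^sup>2 * (cmod (annihilate n k \<psi> R))\<^sup>2"
    if "k < n" "R \<in> fock_basis n" for k R
  proof (cases "annihilate n k \<psi> R = 0")
    case False
    then have "cmod (f k R) \<le> C"
      using assms that annihilate_nonzero_card by blast
    then have "(cmod (f k R))\<^sup>2 \<le> C\<^sup>2"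
      by (simp add: power_mono)
    then show ?thesis
      by (simp add: norm_mult power_mult_distrib mult_right_mono)
  qed simp
  then have "(\<Sum>R\<in>fock_basis n. \<Sum>k<n. (cmod (f k R * annihilate n k \<psi> R))\<^sup>2)
      \<le> C\<^sup>2 * (\<Sum>R\<in>fock_basis n. \<Sum>k<n. (cmod (annihilate n k \<psi> R))\<^sup>2)"
    unfolding sum_distrib_left by (intro sum_mono) auto
  then show ?thesis
    by (simp add: sum_norm_annihilate_power2 eta_state_card_expectation[OF assms(1)])
qed

lemma norm_hopping_form_le:
  assumes "eta_state n eta \<phi>" "eta_state n eta \<psi>" "0 \<le> Cf" "0 \<le> Cg"
    and "\<And>j R. j < n \<Longrightarrow> R \<in> fock_basis n \<Longrightarrow> card R < eta \<Longrightarrow> cmod (f j R) \<le> Cf"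
    and "\<And>k R. k < n \<Longrightarrow> R \<in> fock_basis n \<Longrightarrow> card R < eta \<Longrightarrow> cmod (g k R) \<le> Cg"
  shows "cmod (\<Sum>R\<in>fock_basis n. \<Sum>j<n. \<Sum>k<n.
      cnj (annihilate n j \<phi> R) * (f j R * M j k * g k R) * annihilate n k \<psi> R)
    \<le> spectral_norm n M * Cf * Cg * real eta"
proof -
  let ?x = "\<lambda>R j. cnj (f j R) * annihilate n j \<phi> R"
  let ?y = "\<lambda>R k. g k R * annihilate n k \<psi> R"
  have bound_x: "(\<Sum>R\<in>fock_basis n. \<Sum>j<n. (cmod (?x R j))\<^sup>2) \<le> Cf\<^sup>2 * real eta"
    using sum_norm_scaled_annihilate_power2_le[of n eta \<phi> "\<lambda>j R. cnj (f j R)"] assms by simp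
  have bound_y: "(\<Sum>R\<in>fock_basis n. \<Sum>k<n. (cmod (?y R k))\<^sup>2) \<le> Cg\<^sup>2 * real eta"
    using sum_norm_scaled_annihilate_power2_le[of n eta \<psi> g] assms by simp
  have "cmod (\<Sum>R\<in>fock_basis n. \<Sum>j<n. \<Sum>k<n.
      cnj (annihilate n j \<phi> R) * (f j R * M j k * g k R) * annihilate n k \<psi> R)
    = cmod (\<Sum>R\<in>fock_basis n. \<Sum>j<n. \<Sum>k<n. cnj (?x R j) * M j k * ?y R k)"
    by (simp add: mult_ac)
  also have "\<dots> \<le> spectral_norm n M * sqrt (Cf\<^sup>2 * real eta) * sqrt (Cg\<^sup>2 * real eta)"
    by (rule norm_sum_bilinear_le_spectral_norm[THEN order_trans])
      (intro mult_mono mult_nonneg_nonneg order_refl real_sqrt_le_mono bound_x bound_y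
        spectral_norm_nonneg real_sqrt_ge_zero; simp add: sum_nonneg)
  also have "\<dots> = spectral_norm n M * Cf * Cg * real eta"
    using assms(3,4) by (simp add: real_sqrt_mult)
  finally show ?thesis .
qed

lemma eta_state_exists:
  assumes "eta \<le> n"
  shows "eta_state n eta (\<lambda>S. if S = {..<eta} then 1 else 0)"
proof -
  have "{..<eta} \<in> eta_basis n eta"
    using assms by (auto simp: eta_basis_def fock_basis_def)
  moreover have "finite (eta_basis n eta)"
    by (simp add: eta_basis_def)
  ultimately show ?thesis
    by (simp add: eta_state_def if_distrib[of "\<lambda>z. (cmod z)\<^sup>2"] cong: if_cong)
qed

lemma eta_norm_le:
  assumes "eta \<le> n"
    and "\<And>\<phi> \<psi>. eta_state n eta \<phi> \<Longrightarrow> eta_state n eta \<psi> \<Longrightarrow> cmod (braket n \<phi> X \<psi>) \<le> B"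
  shows "eta_norm n eta X \<le> B"
  unfolding eta_norm_def
  using eta_state_exists[OF assms(1)] assms(2) by (intro cSup_least) auto

lemma eta_norm_le_hopping_form:
  assumes "eta \<le> n" "0 \<le> Cf" "0 \<le> Cg"
    and "\<And>j R. j < n \<Longrightarrow> R \<in> fock_basis n \<Longrightarrow> card R < eta \<Longrightarrow> cmod (f j R) \<le> Cf"
    and "\<And>k R. k < n \<Longrightarrow> R \<in> fock_basis n \<Longrightarrow> card R < eta \<Longrightarrow> cmod (g k R) \<le> Cg"
    and "\<And>\<phi> \<psi>. braket n \<phi> X \<psi> = (\<Sum>R\<in>fock_basis n. \<Sum>j<n. \<Sum>k<n.
      cnj (annihilate n j \<phi> R) * (f j R * M j k * g k R) * annihilate n k \<psi> R)"
  shows "eta_norm n eta X \<le> spectral_norm n M * Cf * Cg * real eta"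
proof (rule eta_norm_le[OF assms(1)])
  fix \<phi> \<psi>
  assume "eta_state n eta \<phi>" "eta_state n eta \<psi>"
  then show "cmod (braket n \<phi> X \<psi>) \<le> spectral_norm n M * Cf * Cg * real eta"
    unfolding assms(6) by (rule norm_hopping_form_le) (use assms in auto)
qed

lemma norm_sum_occupied_le:
  assumes "R \<in> fock_basis n" "card R < eta" "0 \<le> B" "\<And>m. m < n \<Longrightarrow> cmod (w m) \<le> B"
  shows "cmod (\<Sum>m\<in>R. w m) \<le> B * real eta"
proof -
  have "cmod (\<Sum>m\<in>R. w m) \<le> real (card R) * B"
    using assms(1,4) by (intro norm_sum[THEN order_trans] sum_bounded_above) (auto simp: fock_basis_def)
  also have "\<dots> \<le> B * real eta"
    using assms(2,3) by (simp add: mult.commute mult_left_mono)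
  finally show ?thesis .
qed

lemma eta_norm_hopping_weighted_right_le:
  assumes "eta \<le> n" "0 \<le> B" "\<And>k. k < n \<Longrightarrow> cmod (d k) \<le> B"
  shows "eta_norm n eta (\<lambda>T S. \<Sum>j<n. \<Sum>k<n. M j k * d k *
      fmult n (creation n j) (annihilation n k) T S) \<le> spectral_norm n M * B * real eta"
proof -
  have "eta_norm n eta (\<lambda>T S. \<Sum>j<n. \<Sum>k<n. M j k * d k *
      fmult n (creation n j) (annihilation n k) T S) \<le> spectral_norm n M * 1 * B * real eta"
    using assms by (intro eta_norm_le_hopping_form[where f = "\<lambda>_ _. 1" and g = "\<lambda>k _. d k"])
      (unfold braket_hopping, simp_all)
  then show ?thesis
    by simp
qed

lemma eta_norm_hopping_weighted_left_le:
  assumes "eta \<le> n" "0 \<le> B" "\<And>j. j < n \<Longrightarrow> cmod (d j) \<le> B"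
  shows "eta_norm n eta (\<lambda>T S. \<Sum>j<n. \<Sum>k<n. M j k * d j *
      fmult n (creation n j) (annihilation n k) T S) \<le> spectral_norm n M * B * real eta"
proof -
  have "eta_norm n eta (\<lambda>T S. \<Sum>j<n. \<Sum>k<n. M j k * d j *
      fmult n (creation n j) (annihilation n k) T S) \<le> spectral_norm n M * B * 1 * real eta"
    using assms by (intro eta_norm_le_hopping_form[where f = "\<lambda>j _. d j" and g = "\<lambda>_ _. 1"])
      (unfold braket_hopping, simp_all add: mult_ac)
  then show ?thesis
    by simp
qed

lemma eta_norm_hopping_number_right_le:
  assumes "eta \<le> n" "0 \<le> B" "\<And>k m. k < n \<Longrightarrow> m < n \<Longrightarrow> cmod (v k m) \<le> B"
  shows "eta_norm n eta (\<lambda>T S. \<Sum>j<n. \<Sum>k<n. \<Sum>m<n. M j k * v k m *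
      fmult n (fmult n (creation n j) (number_op n m)) (annihilation n k) T S)
    \<le> spectral_norm n M * B * (real eta)\<^sup>2"
proof -
  have "eta_norm n eta (\<lambda>T S. \<Sum>j<n. \<Sum>k<n. \<Sum>m<n. M j k * v k m *
      fmult n (fmult n (creation n j) (number_op n m)) (annihilation n k) T S)
    \<le> spectral_norm n M * 1 * (B * real eta) * real eta"
    using assms by (intro eta_norm_le_hopping_form[where f = "\<lambda>_ _. 1" and g = "\<lambda>k R. \<Sum>m\<in>R. v k m"])
      (unfold braket_hopping_number, simp_all add: norm_sum_occupied_le sum_distrib_left)
  then show ?thesis
    by (simp add: power2_eq_square mult_ac)
qed

lemma eta_norm_hopping_number_left_le:
  assumes "eta \<le> n" "0 \<le> B" "\<And>j m. j < n \<Longrightarrow> m < n \<Longrightarrow> cmod (v j m) \<le> B"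
  shows "eta_norm n eta (\<lambda>T S. \<Sum>j<n. \<Sum>k<n. \<Sum>m<n. M j k * v j m *
      fmult n (fmult n (creation n j) (number_op n m)) (annihilation n k) T S)
    \<le> spectral_norm n M * B * (real eta)\<^sup>2"
proof -
  have "eta_norm n eta (\<lambda>T S. \<Sum>j<n. \<Sum>k<n. \<Sum>m<n. M j k * v j m *
      fmult n (fmult n (creation n j) (number_op n m)) (annihilation n k) T S)
    \<le> spectral_norm n M * (B * real eta) * 1 * real eta"
    using assms by (intro eta_norm_le_hopping_form[where f = "\<lambda>j R. \<Sum>m\<in>R. v j m" and g = "\<lambda>_ _. 1"])
      (unfold braket_hopping_number, simp_all add: norm_sum_occupied_le sum_distrib_left mult_ac)
  then show ?thesis
    by (simp add: power2_eq_square mult_ac)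
qed

lemma max_norm_nonneg: "0 \<le> max_norm n \<nu>"
  unfolding max_norm_def by (rule Max_ge) (auto intro: finite_image_set2)

lemma norm_le_max_norm: "l < n \<Longrightarrow> m < n \<Longrightarrow> cmod (\<nu> l m) \<le> max_norm n \<nu>"
  unfolding max_norm_def by (rule Max_ge) (auto intro: finite_image_set2)

theorem proposition8:
  fixes n eta :: nat and \<tau> \<nu> :: "nat \<Rightarrow> nat \<Rightarrow> complex"
  assumes "eta \<le> n"
  shows
  "(eta_norm n eta (\<lambda>T S. \<Sum>j<n. \<Sum>k<n. \<Sum>m<n. \<tau> j k * \<nu> k m *
       fmult n (fmult n (creation n j) (number_op n m)) (annihilation n k) T S)
     \<le> spectral_norm n \<tau> * max_norm n \<nu> * (real eta)\<^sup>2)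
   \<and> (eta_norm n eta (\<lambda>T S. \<Sum>j<n. \<Sum>k<n. \<tau> j k * \<nu> k k *
       fmult n (creation n j) (annihilation n k) T S)
     \<le> spectral_norm n \<tau> * max_norm n \<nu> * real eta)
   \<and> (eta_norm n eta (\<lambda>T S. \<Sum>j<n. \<Sum>k<n. \<Sum>l<n. \<tau> j k * \<nu> l k *
       fmult n (fmult n (creation n j) (number_op n l)) (annihilation n k) T S)
     \<le> spectral_norm n \<tau> * max_norm n \<nu> * (real eta)\<^sup>2)
   \<and> (eta_norm n eta (\<lambda>T S. \<Sum>j<n. \<Sum>k<n. \<Sum>m<n. \<tau> j k * \<nu> j m *
       fmult n (fmult n (creation n j) (number_op n m)) (annihilation n k) T S)
     \<le> spectral_norm n \<tau> * max_norm n \<nu> * (real eta)\<^sup>2)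
   \<and> (eta_norm n eta (\<lambda>T S. \<Sum>j<n. \<Sum>k<n. \<tau> j k * \<nu> j j *
       fmult n (creation n j) (annihilation n k) T S)
     \<le> spectral_norm n \<tau> * max_norm n \<nu> * real eta)
   \<and> (eta_norm n eta (\<lambda>T S. \<Sum>j<n. \<Sum>k<n. \<Sum>l<n. \<tau> j k * \<nu> l j *
       fmult n (fmult n (creation n j) (number_op n l)) (annihilation n k) T S)
     \<le> spectral_norm n \<tau> * max_norm n \<nu> * (real eta)\<^sup>2)"
  using assms max_norm_nonneg norm_le_max_norm
  by (intro conjI eta_norm_hopping_number_right_le eta_norm_hopping_weighted_right_le
      eta_norm_hopping_number_left_le eta_norm_hopping_weighted_left_le) auto

end
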